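(* Let $S\subseteq\mathbb N^2$ be a symmetric local good semigroup, let $\boldsymbol e$ be the minimal element of $S$ having all components positive, and suppose $\Delta^S(\boldsymbol e)\ne\emptyset$. Then every absolute element of $S$ belongs to $\mathrm{Ap}(S,\boldsymbol e)=S\setminus(\boldsymbol e+S)$.
   Context: A good semigroup is a submonoid $S$ of $(\mathbb{N}^2,+)$ closed under componentwise minimum (G1), satisfying (G2): if $\boldsymbol\alpha\neq\boldsymbol\beta\in S$ and $\alpha_i=\beta_i$, there is $\boldsymbol\epsilon\in S$ with $\epsilon_i>\alpha_i$, $\epsilon_j\ge\min\{\alpha_j,\beta_j\}$ for $j\ne i$, with equality if $\alpha_j\ne\beta_j$; and (G3): $\boldsymbol c+\mathbb N^2\subseteq S$ for some $\boldsymbol c$. Local: $\boldsymbol 0$ is its only element with a zero component. Conductor $\boldsymbol c$: the minimal $\boldsymbol\alpha\in\mathbb Z^2$ with $\boldsymbol\alpha+\mathbb N^2\subseteq S$; $\boldsymbol\gamma=\boldsymbol c-(1,1)$. For $\boldsymbol\alpha\in\mathbb Z^2$: $\Delta^S_i(\boldsymbol\alpha)=\{\boldsymbol\beta\in S:\beta_i=\alpha_i,\ \beta_j>\alpha_j\ (j\ne i)\}$ and $\Delta^S(\boldsymbol\alpha)=\Delta^S_1(\boldsymbol\alpha)\cup\Delta^S_2(\boldsymbol\alpha)$. $S$ is symmetric if for every $\boldsymbol\alpha\in\mathbb Z^2$: $\boldsymbol\alpha\in S$ iff $\Delta^S(\boldsymbol\gamma-\boldsymbol\alpha)=\emptyset$.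 An element $\boldsymbol\alpha\in S$ is absolute if $\Delta^S(\boldsymbol\alpha)=\emptyset$. *)

theory Defs
  imports Main
begin

(* Elements of Z^2 are represented as int \<times> int; N^2 is the subset with
   nonnegative components. *)

definition leq2 :: "int \<times> int \<Rightarrow> int \<times> int \<Rightarrow> bool" where
  "leq2 a b \<longleftrightarrow> fst a \<le> fst b \<and> snd a \<le> snd b"

definition add2 :: "int \<times> int \<Rightarrow> int \<times> int \<Rightarrow> int \<times> int" where
  "add2 a b = (fst a + fst b, snd a + snd b)"

definition sub2 :: "int \<times> int \<Rightarrow> int \<times> int \<Rightarrow> int \<times> int" where
  "sub2 a b = (fst a - fst b, snd a - snd b)"

definition min2 :: "int \<times> int \<Rightarrow> int \<times> int \<Rightarrow> int \<times> int" where
  "min2 a b = (min (fst a) (fst b), min (snd a) (snd b))"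

definition N2 :: "(int \<times> int) set" where
  "N2 = {a. 0 \<le> fst a \<and> 0 \<le> snd a}"

definition submonoid_N2 :: "(int \<times> int) set \<Rightarrow> bool" where
  "submonoid_N2 S \<longleftrightarrow> S \<subseteq> N2 \<and> (0,0) \<in> S \<and> (\<forall>a\<in>S. \<forall>b\<in>S. add2 a b \<in> S)"

definition G1 :: "(int \<times> int) set \<Rightarrow> bool" where
  "G1 S \<longleftrightarrow> (\<forall>a\<in>S. \<forall>b\<in>S. min2 a b \<in> S)"

(* (G2), written out for i = 1 (fst) and i = 2 (snd) *)
definition G2 :: "(int \<times> int) set \<Rightarrow> bool" where
  "G2 S \<longleftrightarrow>
    (\<forall>a\<in>S. \<forall>b\<in>S. a \<noteq> b \<and> fst a = fst b \<longrightarrow>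
       (\<exists>e\<in>S. fst e > fst a \<and> snd e \<ge> min (snd a) (snd b) \<and>
              (snd a \<noteq> snd b \<longrightarrow> snd e = min (snd a) (snd b)))) \<and>
    (\<forall>a\<in>S. \<forall>b\<in>S. a \<noteq> b \<and> snd a = snd b \<longrightarrow>
       (\<exists>e\<in>S. snd e > snd a \<and> fst e \<ge> min (fst a) (fst b) \<and>
              (fst a \<noteq> fst b \<longrightarrow> fst e = min (fst a) (fst b))))"

definition G3 :: "(int \<times> int) set \<Rightarrow> bool" where
  "G3 S \<longleftrightarrow> (\<exists>c\<in>N2. \<forall>n\<in>N2. add2 c n \<in> S)"

definition good_semigroup :: "(int \<times> int) set \<Rightarrow> bool" where
  "good_semigroup S \<longleftrightarrow> submonoid_N2 S \<and> G1 S \<and> G2 S \<and> G3 S"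

definition local_gs :: "(int \<times> int) set \<Rightarrow> bool" where
  "local_gs S \<longleftrightarrow> (\<forall>a\<in>S. (fst a = 0 \<or> snd a = 0) \<longrightarrow> a = (0,0))"

definition conductor :: "(int \<times> int) set \<Rightarrow> int \<times> int" where
  "conductor S = (THE c. (\<forall>n\<in>N2. add2 c n \<in> S) \<and>
                        (\<forall>d. (\<forall>n\<in>N2. add2 d n \<in> S) \<longrightarrow> leq2 c d))"

definition gamma :: "(int \<times> int) set \<Rightarrow> int \<times> int" where
  "gamma S = sub2 (conductor S) (1,1)"

definition Delta1 :: "(int \<times> int) set \<Rightarrow> int \<times> int \<Rightarrow> (int \<times> int) set" where
  "Delta1 S a = {b\<in>S. fst b = fst a \<and> snd b > snd a}"

definition Delta2 :: "(int \<times> int) set \<Rightarrow> int \<times> int \<Rightarrow> (int \<times> int) set" where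
  "Delta2 S a = {b\<in>S. snd b = snd a \<and> fst b > fst a}"

definition Delta :: "(int \<times> int) set \<Rightarrow> int \<times> int \<Rightarrow> (int \<times> int) set" where
  "Delta S a = Delta1 S a \<union> Delta2 S a"

definition symmetric_gs :: "(int \<times> int) set \<Rightarrow> bool" where
  "symmetric_gs S \<longleftrightarrow> (\<forall>a. a \<in> S \<longleftrightarrow> Delta S (sub2 (gamma S) a) = {})"

definition absolute :: "(int \<times> int) set \<Rightarrow> int \<times> int \<Rightarrow> bool" where
  "absolute S a \<longleftrightarrow> a \<in> S \<and> Delta S a = {}"

definition Apery :: "(int \<times> int) set \<Rightarrow> int \<times> int \<Rightarrow> (int \<times> int) set" where
  "Apery S e = S - (add2 e ` S)"

end

theory Submission
  imports Defs
begin

(* The sets Delta are translation invariant: if b \<in> Delta(e) and s \<in> S, then b + s \<in> Delta(e + s).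
   Hence no element of e + S is absolute as soon as Delta(e) is nonempty. *)

lemma good_semigroup_add2_closed:
  assumes "good_semigroup S" and "x \<in> S" and "y \<in> S"
  shows "add2 x y \<in> S"
  using assms unfolding good_semigroup_def submonoid_N2_def by blast

lemma Delta_add2:
  assumes "b \<in> Delta S a" and "add2 b s \<in> S"
  shows "add2 b s \<in> Delta S (add2 a s)"
  using assms unfolding Delta_def Delta1_def Delta2_def add2_def by auto

lemma not_absolute_add2:
  assumes "good_semigroup S" and "Delta S e \<noteq> {}" and "s \<in> S"
  shows "\<not> absolute S (add2 e s)"
proof -
  obtain b where b: "b \<in> Delta S e"
    using assms(2) by blast
  then have "b \<in> S"
    unfolding Delta_def Delta1_def Delta2_def by blast
  then have "add2 b s \<in> Delta S (add2 e s)"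
    using Delta_add2 b good_semigroup_add2_closed assms(1,3) by blast
  then show ?thesis
    unfolding absolute_def by blast
qed

theorem lemma6p3:
  fixes S :: "(int \<times> int) set" and e :: "int \<times> int"
  assumes "good_semigroup S" and "local_gs S" and "symmetric_gs S"
    and "e \<in> S" and "fst e > 0" and "snd e > 0"
    and "\<forall>f\<in>S. fst f > 0 \<and> snd f > 0 \<longrightarrow> leq2 e f"
    and "Delta S e \<noteq> {}"
  shows "\<forall>a. absolute S a \<longrightarrow> a \<in> Apery S e"
proof (intro allI impI)
  fix a
  assume "absolute S a"
  moreover have "a \<notin> add2 e ` S"
    using not_absolute_add2 assms(1,8) \<open>absolute S a\<close> by blast
  ultimately show "a \<in> Apery S e"
    unfolding Apery_def absolute_def by blast
qed

end
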